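(* Let $H$ be a Heyting algebra, $n\ge1$, and let $f_1,\dots,f_n:H\to H$ be monotone polynomials each having a least fixed point $\mu_x.f_i(x)$. Then $x\mapsto\bigwedge_{i=1}^n f_i(x)$ has a least fixed point and $\mu_x.\bigwedge_{i=1}^n f_i(x)=\bigwedge_{i=1}^n\mu_x.f_i(x)$.
   Context: A function $f:H\to H$ is a polynomial if there exist an IPC formula $\phi$, a variable $x$ and a valuation $v$ in $H$ of the variables of $\phi$ other than $x$ such that $f(h)=[\![\phi]\!]_{(v,h/x)}$ for every $h\in H$. Least fixed points are least prefixed points. *)

theory Defs
  imports Main
begin

class heyting_algebra = bounded_lattice +
  fixes himp :: "'a \<Rightarrow> 'a \<Rightarrow> 'a"
  assumes inf_le_himp_iff: "inf x y \<le> z \<longleftrightarrow> x \<le> himp y z"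

datatype ipc_fm =
    PVar nat
  | FBot
  | FTop
  | FAnd ipc_fm ipc_fm
  | FOr ipc_fm ipc_fm
  | FImp ipc_fm ipc_fm

primrec eval_fm :: "(nat \<Rightarrow> 'a::heyting_algebra) \<Rightarrow> ipc_fm \<Rightarrow> 'a" where
  "eval_fm v (PVar p) = v p"
| "eval_fm v FBot = bot"
| "eval_fm v FTop = top"
| "eval_fm v (FAnd a b) = inf (eval_fm v a) (eval_fm v b)"
| "eval_fm v (FOr a b) = sup (eval_fm v a) (eval_fm v b)"
| "eval_fm v (FImp a b) = himp (eval_fm v a) (eval_fm v b)"

text \<open>A function is a polynomial if it is induced by a formula, a distinguished
  variable x and a valuation of the remaining variables (the value of the valuation
  at x is irrelevant, being overwritten).\<close>
definition polynomial :: "('a::heyting_algebra \<Rightarrow> 'a) \<Rightarrow> bool" where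
  "polynomial f \<longleftrightarrow> (\<exists>\<phi> x v. \<forall>h. f h = eval_fm (v(x := h)) \<phi>)"

text \<open>Least fixed points are least prefixed points.\<close>
definition is_lfp :: "('a::order \<Rightarrow> 'a) \<Rightarrow> 'a \<Rightarrow> bool" where
  "is_lfp f m \<longleftrightarrow> f m \<le> m \<and> (\<forall>y. f y \<le> y \<longrightarrow> m \<le> y)"

end

theory Submission
  imports Defs
begin

text \<open>For each a, the relation inf a x = inf a y is a congruence of the Heyting algebra,
  so every polynomial f respects it. This relativises Park induction: if inf c (f y) \<le> y
  then f (himp c y) \<le> himp c y, hence inf c m \<le> y for the least prefixed point m of f.
  Starting from the hypothesis that y is a prefixed point of the meet of the f i, one
  replaces the conjuncts f i y by mu i one at a time, keeping the others in the context c.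
  That the meet of the mu i is itself a prefixed point only needs monotonicity.\<close>

lemma inf_himp_le: "inf x (himp x y) \<le> (y::'a::heyting_algebra)"
  using inf_le_himp_iff[of "himp x y" x y] by (simp add: inf_commute)

lemma inf_sup_distrib_heyting:
  fixes x :: "'a::heyting_algebra"
  shows "inf x (sup y z) = sup (inf x y) (inf x z)"
proof (rule antisym)
  have "y \<le> himp x (sup (inf x y) (inf x z))" "z \<le> himp x (sup (inf x y) (inf x z))"
    by (simp_all add: inf_le_himp_iff[symmetric] inf_commute)
  then have "sup y z \<le> himp x (sup (inf x y) (inf x z))"
    by simp
  then show "inf x (sup y z) \<le> sup (inf x y) (inf x z)"
    by (simp add: inf_le_himp_iff[symmetric] inf_commute)
qed (rule distrib_inf_le)

instance heyting_algebra \<subseteq> distrib_lattice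
  by standard (rule distrib_imp1[OF inf_sup_distrib_heyting])

lemma inf_himp_self: "inf x (himp x y) = inf x (y::'a::heyting_algebra)"
proof (rule antisym)
  show "inf x (himp x y) \<le> inf x y"
    by (simp add: inf_himp_le)
  have "inf (inf x y) x \<le> y"
    by (simp add: le_infI1)
  then have "inf x y \<le> himp x y"
    by (rule inf_le_himp_iff[THEN iffD1])
  then show "inf x y \<le> inf x (himp x y)"
    by simp
qed

lemma inf_himp_relative:
  fixes a :: "'a::heyting_algebra"
  shows "inf a (himp x y) = inf a (himp (inf a x) (inf a y))"
proof (rule antisym)
  have "inf (inf a (himp x y)) (inf a x) \<le> inf a y"
    using inf_himp_le[of x y] by (auto intro: le_infI1 le_infI2 simp: inf_aci)
  then have "inf a (himp x y) \<le> himp (inf a x) (inf a y)"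
    by (rule inf_le_himp_iff[THEN iffD1])
  then show "inf a (himp x y) \<le> inf a (himp (inf a x) (inf a y))"
    by simp
  have "inf (inf a (himp (inf a x) (inf a y))) x \<le> y"
    using inf_himp_le[of "inf a x" "inf a y"] by (auto intro: le_infI1 le_infI2 simp: inf_aci)
  then have "inf a (himp (inf a x) (inf a y)) \<le> himp x y"
    by (rule inf_le_himp_iff[THEN iffD1])
  then show "inf a (himp (inf a x) (inf a y)) \<le> inf a (himp x y)"
    by simp
qed

definition compatible :: "('a::heyting_algebra \<Rightarrow> 'a) \<Rightarrow> bool" where
  "compatible f \<longleftrightarrow> (\<forall>a x y. inf a x = inf a y \<longrightarrow> inf a (f x) = inf a (f y))"

lemma eval_fm_relative_cong:
  assumes "\<And>p. inf a (v p) = inf a (w p)"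
  shows "inf a (eval_fm v \<phi>) = inf a (eval_fm w \<phi>)"
proof (induction \<phi>)
  case (FAnd \<phi> \<psi>)
  have "inf a (inf x y) = inf (inf a x) (inf a y)" for x y
    by (simp add: inf_aci)
  with FAnd show ?case
    by simp
next
  case (FOr \<phi> \<psi>)
  then show ?case
    by (simp add: inf_sup_distrib1)
next
  case (FImp \<phi> \<psi>)
  then show ?case
    by (metis eval_fm.simps(6) inf_himp_relative)
qed (simp_all add: assms)

lemma polynomial_compatible:
  assumes "polynomial f"
  shows "compatible f"
  unfolding compatible_def
proof (intro allI impI)
  fix a x y :: 'a
  assume "inf a x = inf a y"
  obtain \<phi> p v where f: "\<And>h. f h = eval_fm (v(p := h)) \<phi>"
    using assms unfolding polynomial_def by blast
  have "inf a ((v(p := x)) q) = inf a ((v(p := y)) q)" for q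
    using \<open>inf a x = inf a y\<close> by simp
  then show "inf a (f x) = inf a (f y)"
    unfolding f by (rule eval_fm_relative_cong)
qed

lemma is_lfp_relative_induct:
  assumes "compatible f" "is_lfp f m" "inf c (f y) \<le> y"
  shows "inf c m \<le> y"
proof -
  have "inf c (f (himp c y)) = inf c (f y)"
    using assms(1) inf_himp_self unfolding compatible_def by blast
  with assms(3) have "inf (f (himp c y)) c \<le> y"
    by (simp add: inf_commute)
  then have "f (himp c y) \<le> himp c y"
    by (rule inf_le_himp_iff[THEN iffD1])
  with assms(2) have "m \<le> himp c y"
    unfolding is_lfp_def by blast
  then have "inf m c \<le> y"
    by (rule inf_le_himp_iff[THEN iffD2])
  then show ?thesis
    by (simp add: inf_commute)
qed

lemma Inf_fin_is_lfp_relative_induct: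
  assumes "finite I" "I \<noteq> {}"
    and "\<forall>i\<in>I. compatible (f i) \<and> is_lfp (f i) (mu i)"
    and "inf c (Inf_fin ((\<lambda>i. f i y) ` I)) \<le> y"
  shows "inf c (Inf_fin (mu ` I)) \<le> y"
  using assms
proof (induction I arbitrary: c rule: finite_ne_induct)
  case (singleton i)
  then show ?case
    using is_lfp_relative_induct[of "f i" "mu i" c y] by simp
next
  case (insert j I)
  have "inf (inf c (f j y)) (Inf_fin ((\<lambda>i. f i y) ` I)) \<le> y"
    using insert.hyps insert.prems(2) by (simp add: inf_aci)
  then have "inf (inf c (f j y)) (Inf_fin (mu ` I)) \<le> y"
    using insert.IH insert.prems(1) by simp
  then have "inf (inf c (Inf_fin (mu ` I))) (f j y) \<le> y"
    by (simp add: inf_aci)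
  then have "inf (inf c (Inf_fin (mu ` I))) (mu j) \<le> y"
    using is_lfp_relative_induct insert.prems(1) by blast
  then show ?case
    using insert.hyps by (simp add: inf_aci)
qed

lemma Inf_fin_prefixed_point:
  fixes f :: "'i \<Rightarrow> 'a::lattice \<Rightarrow> 'a"
  assumes "finite I" "I \<noteq> {}" "\<forall>i\<in>I. mono (f i) \<and> f i (mu i) \<le> mu i"
  shows "Inf_fin ((\<lambda>i. f i (Inf_fin (mu ` I))) ` I) \<le> Inf_fin (mu ` I)"
proof -
  have "Inf_fin ((\<lambda>i. f i (Inf_fin (mu ` I))) ` I) \<le> mu j" if "j \<in> I" for j
  proof -
    have "Inf_fin ((\<lambda>i. f i (Inf_fin (mu ` I))) ` I) \<le> f j (Inf_fin (mu ` I))"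
      using assms(1) that by (simp add: Inf_fin.coboundedI)
    also have "\<dots> \<le> f j (mu j)"
      using assms that by (simp add: Inf_fin.coboundedI monoD)
    also have "\<dots> \<le> mu j"
      using assms(3) that by blast
    finally show ?thesis .
  qed
  then show ?thesis
    using assms(1,2) by (simp add: Inf_fin.bounded_iff)
qed

lemma is_lfp_Inf_fin:
  fixes f :: "'i \<Rightarrow> 'a::heyting_algebra \<Rightarrow> 'a"
  assumes "finite I" "I \<noteq> {}" "\<forall>i\<in>I. mono (f i) \<and> polynomial (f i) \<and> is_lfp (f i) (mu i)"
  shows "is_lfp (\<lambda>x. Inf_fin ((\<lambda>i. f i x) ` I)) (Inf_fin (mu ` I))"
  unfolding is_lfp_def
proof (intro conjI allI impI)
  show "Inf_fin ((\<lambda>i. f i (Inf_fin (mu ` I))) ` I) \<le> Inf_fin (mu ` I)"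
    using Inf_fin_prefixed_point[of I f mu] assms unfolding is_lfp_def by blast
  have "\<forall>i\<in>I. compatible (f i) \<and> is_lfp (f i) (mu i)"
    using assms(3) polynomial_compatible by blast
  then show "Inf_fin (mu ` I) \<le> y" if "Inf_fin ((\<lambda>i. f i y) ` I) \<le> y" for y
    using Inf_fin_is_lfp_relative_induct[of I f mu top y] assms(1,2) that by simp
qed

theorem mainTheorem7:
  fixes f :: "nat \<Rightarrow> 'a::heyting_algebra \<Rightarrow> 'a" and mu :: "nat \<Rightarrow> 'a" and n :: nat
  assumes "n \<ge> 1"
    and "\<forall>i\<in>{1..n}. mono (f i) \<and> polynomial (f i)"
    and "\<forall>i\<in>{1..n}. is_lfp (f i) (mu i)"
  shows "is_lfp (\<lambda>x. Inf_fin ((\<lambda>i. f i x) ` {1..n})) (Inf_fin (mu ` {1..n}))"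
  using assms by (intro is_lfp_Inf_fin) auto

end
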